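(* Let $p,q$ be relatively prime positive integers, $k\ge1$ an integer, $\mu\in\mathbb{C}$, and consider the closed meromorphic $1$-form on $(\mathbb{C}^2,0)$ $$\tau=(\mu-1)p\frac{\mathrm{d}x}{x}+\mu q\frac{\mathrm{d}y}{y}-\mathrm{d}\left(\frac{1}{k(x^py^q)^k}\right),$$ and let $\mathcal{F}$ be the real analytic Levi-flat foliation defined by the real $1$-form $\mathrm{Re}(\tau)$. Then there exists a $C^\infty$ submersion, defined on the complement of $\{xy=0\}$ in a neighborhood of $0\in\mathbb{C}^2$, which is a first integral of $\mathcal{F}$.
   Context: $\tau$ is $\eta/(xy(x^py^q)^k)$ where $\eta=py(1+(\mu-1)(x^py^q)^k)\mathrm{d}x+qx(1+\mu(x^py^q)^k)\mathrm{d}y$ defines a resonant holomorphic foliation. A first integral of a foliation is a function constant along its leaves. *)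

theory Defs
  imports "HOL-Analysis.Analysis"
begin

text \<open>D vs x is the iterated derivative of f at x applied to the directions in vs;
  for every list of directions, D vs is differentiable at every point of S with
  derivative v \<mapsto> D (v # vs) x.\<close>
definition smooth_on :: "'a::real_normed_vector set \<Rightarrow> ('a \<Rightarrow> 'b::real_normed_vector) \<Rightarrow> bool" where
  "smooth_on S f \<longleftrightarrow>
     (\<exists>D :: 'a list \<Rightarrow> 'a \<Rightarrow> 'b.
        (\<forall>x\<in>S. D [] x = f x) \<and>
        (\<forall>vs. \<forall>x\<in>S. (D vs has_derivative (\<lambda>v. D (v # vs) x)) (at x)))"

definition off_axes :: "(complex \<times> complex) set" where
  "off_axes = {z. fst z * snd z \<noteq> 0}"

text \<open>Here d(1/(k w^k)) = - w^(-k-1) dw with w = x^p y^q, i.e.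
  d(1/(k (x^p y^q)^k)) = -(p x^(p-1) y^q dx + q x^p y^(q-1) dy) / (x^p y^q)^(k+1).\<close>
definition tau :: "nat \<Rightarrow> nat \<Rightarrow> nat \<Rightarrow> complex \<Rightarrow> complex \<times> complex \<Rightarrow> complex \<times> complex \<Rightarrow> complex" where
  "tau p q k \<mu> z v =
     (let x = fst z; y = snd z; a = fst v; b = snd v in
        (\<mu> - 1) * of_nat p * a / x + \<mu> * of_nat q * b / y
        - ( - (of_nat p * x ^ (p - 1) * y ^ q * a + of_nat q * x ^ p * y ^ (q - 1) * b)
              / (x ^ p * y ^ q) ^ (k + 1)))"

definition re_tau :: "nat \<Rightarrow> nat \<Rightarrow> nat \<Rightarrow> complex \<Rightarrow> complex \<times> complex \<Rightarrow> complex \<times> complex \<Rightarrow> real" where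
  "re_tau p q k \<mu> z v = Re (tau p q k \<mu> z v)"

end

(*
  With u = (x^p y^q)^k one has du/u = k (p dx/x + q dy/y), so tau = dh for the multivalued
  function h = Re((mu log u - 1/u)/k) - p log|x|, whose only ambiguity is the monodromy
  2 pi Im(mu)/k coming from arg u. The principal branch of log gives a smooth first integral
  away from the cut {u <= 0}. For small |u| (x, y in the unit disc) h is very negative near
  u > 0, while the branch continuous across the negative real axis is very large near u < 0.
  On the half-plane Im u < 0, subtracting monodromy * chi(h/W), with chi a smooth step from
  0 to 1 on [0, 1], therefore changes nothing near u > 0 and produces the continuous branch
  near u < 0, so the glued function is smooth. Choosing W > |monodromy| sup|chi'| keeps its
  differential a nonzero multiple of Re tau, which itself is nonzero since mu + 1/u <> 0 for
  small u.
*)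

theory Submission
  imports Defs "HOL-Computational_Algebra.Polynomial" "HOL-Real_Asymp.Real_Asymp"
begin

section \<open>Smooth functions\<close>

definition derivs_in ::
    "('a::real_normed_vector \<Rightarrow> 'b::real_normed_vector) set \<Rightarrow> 'a set \<Rightarrow> ('a \<Rightarrow> 'b) \<Rightarrow> bool"
  where "derivs_in A S f \<longleftrightarrow>
    (\<exists>G. (\<forall>v. G v \<in> A) \<and> (\<forall>x\<in>S. (f has_derivative (\<lambda>v. G v x)) (at x)))"

lemma smooth_on_if_derivs_closed:
  assumes "f \<in> A" and closed: "\<And>g. g \<in> A \<Longrightarrow> derivs_in A S g"
  shows "smooth_on S f"
proof -
  define G where
    "G g = (SOME G. (\<forall>v. G v \<in> A) \<and> (\<forall>x\<in>S. (g has_derivative (\<lambda>v. G v x)) (at x)))" for g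
  have G: "(\<forall>v. G g v \<in> A) \<and> (\<forall>x\<in>S. (g has_derivative (\<lambda>v. G g v x)) (at x))"
    if "g \<in> A" for g
    using someI_ex[OF closed[OF that, unfolded derivs_in_def]] unfolding G_def .
  define D where "D = rec_list f (\<lambda>v _ Dvs. G Dvs v)"
  have "D vs \<in> A" for vs
    by (induction vs) (use assms(1) G in \<open>auto simp: D_def\<close>)
  then show ?thesis
    unfolding smooth_on_def using G by (intro exI[of _ D]) (auto simp: D_def)
qed

lemma smooth_on_cong:
  "smooth_on S f \<Longrightarrow> (\<And>x. x \<in> S \<Longrightarrow> f x = g x) \<Longrightarrow> smooth_on S g"
  unfolding smooth_on_def by auto

lemma smooth_on_subset: "smooth_on S f \<Longrightarrow> T \<subseteq> S \<Longrightarrow> smooth_on T f"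
  unfolding smooth_on_def by blast

lemma smooth_on_derivs_in:
  assumes "smooth_on S f" "open S"
  shows "derivs_in {g. smooth_on S g} S f"
proof -
  obtain D where D0: "\<forall>x\<in>S. D [] x = f x"
    and D: "\<forall>vs. \<forall>x\<in>S. (D vs has_derivative (\<lambda>v. D (v # vs) x)) (at x)"
    using assms(1) unfolding smooth_on_def by blast
  have "smooth_on S (D [v])" for v
    unfolding smooth_on_def using D by (intro exI[of _ "\<lambda>vs. D (vs @ [v])"]) auto
  moreover have "(f has_derivative (\<lambda>v. D [v] x)) (at x)" if "x \<in> S" for x
  proof -
    have "(D [] has_derivative (\<lambda>v. D [v] x)) (at x)" using D that by blast
    then show ?thesis
      by (rule has_derivative_transform_within_open[OF _ assms(2) that]) (use D0 in auto)
  qed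
  ultimately show ?thesis
    unfolding derivs_in_def by (intro exI[of _ "\<lambda>v. D [v]"]) auto
qed

lemma smooth_on_local:
  fixes f :: "'a::real_normed_vector \<Rightarrow> 'b::real_normed_vector"
  assumes "open S" and local: "\<And>x. x \<in> S \<Longrightarrow> \<exists>N. open N \<and> x \<in> N \<and> smooth_on N f"
  shows "smooth_on S f"
proof (rule smooth_on_if_derivs_closed[where
      A="{g. \<forall>x\<in>S. \<exists>N. open N \<and> x \<in> N \<and> smooth_on N g}"])
  show "f \<in> {g. \<forall>x\<in>S. \<exists>N. open N \<and> x \<in> N \<and> smooth_on N g}"
    using local by blast
next
  fix g :: "'a \<Rightarrow> 'b"
  assume g: "g \<in> {g. \<forall>x\<in>S. \<exists>N. open N \<and> x \<in> N \<and> smooth_on N g}"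
  define g' where "g' x = (SOME D. (g has_derivative D) (at x))" for x
  have near: "\<exists>N G. open N \<and> x \<in> N \<and> (\<forall>v. smooth_on N (G v)) \<and>
      (\<forall>y\<in>N. g' y = (\<lambda>v. G v y) \<and> (g has_derivative (\<lambda>v. G v y)) (at y))"
    if x: "x \<in> S" for x
  proof -
    obtain N where N: "open N" "x \<in> N" "smooth_on N g"
      using g x by blast
    obtain G where G: "\<forall>v. smooth_on N (G v)" "\<forall>y\<in>N. (g has_derivative (\<lambda>v. G v y)) (at y)"
      using smooth_on_derivs_in[OF N(3,1)] unfolding derivs_in_def by blast
    have "g' y = (\<lambda>v. G v y)" if "y \<in> N" for y
    proof -
      have "(g has_derivative g' y) (at y)"
        unfolding g'_def by (rule someI[where x="\<lambda>v. G v y"]) (use G(2) that in blast)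
      then show ?thesis
        using G(2) that has_derivative_unique by blast
    qed
    then show ?thesis
      using N G by (intro exI[of _ N] exI[of _ G]) simp
  qed
  show "derivs_in {g. \<forall>x\<in>S. \<exists>N. open N \<and> x \<in> N \<and> smooth_on N g} S g"
    unfolding derivs_in_def
  proof (intro exI[of _ "\<lambda>v y. g' y v"] conjI allI ballI CollectI)
    fix v x assume "x \<in> S"
    from near[OF this] obtain N G
      where N: "open N" "x \<in> N" "smooth_on N (G v)" "\<forall>y\<in>N. g' y = (\<lambda>v. G v y)"
      by auto
    have "smooth_on N (\<lambda>y. g' y v)"
      using N(3) by (rule smooth_on_cong) (simp add: N(4))
    with N(1,2) show "\<exists>N. open N \<and> x \<in> N \<and> smooth_on N (\<lambda>y. g' y v)"
      by blast
  next
    fix x assume "x \<in> S"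
    from near[OF this] obtain N G
      where "x \<in> N" "\<forall>y\<in>N. g' y = (\<lambda>v. G v y) \<and> (g has_derivative (\<lambda>v. G v y)) (at y)"
      by auto
    then show "(g has_derivative (\<lambda>v. g' x v)) (at x)"
      by simp
  qed
qed

lemma smooth_on_imp_continuous_on:
  assumes "smooth_on S f" "open S"
  shows "continuous_on S f"
proof -
  obtain G where "\<forall>x\<in>S. (f has_derivative (\<lambda>v. G v x)) (at x)"
    using smooth_on_derivs_in[OF assms] unfolding derivs_in_def by blast
  then show ?thesis
    by (intro continuous_at_imp_continuous_on ballI has_derivative_continuous) blast
qed

lemma smooth_on_real_derivatives:
  fixes f :: "real \<Rightarrow> real"
  assumes "\<And>t. t \<in> I \<Longrightarrow> d 0 t = f t"
    and "\<And>n t. t \<in> I \<Longrightarrow> (d n has_real_derivative d (Suc n) t) (at t)"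
  shows "smooth_on I f"
  unfolding smooth_on_def
proof (intro exI[of _ "\<lambda>vs t. prod_list vs * d (length vs) t"] conjI ballI allI)
  fix x assume "x \<in> I"
  then show "prod_list [] * d (length []) x = f x" using assms(1) by simp
next
  fix vs and x assume x: "x \<in> I"
  show "((\<lambda>t. prod_list vs * d (length vs) t) has_derivative
      (\<lambda>v. prod_list (v # vs) * d (length (v # vs)) x)) (at x)"
    using assms(2)[OF x, of "length vs"] unfolding has_field_derivative_def
    by (auto intro!: derivative_eq_intros simp: ac_simps)
qed

lemma smooth_on_real_deriv:
  fixes f :: "real \<Rightarrow> real"
  assumes "smooth_on I f" "open I"
  obtains f' where "\<And>t. t \<in> I \<Longrightarrow> (f has_real_derivative f' t) (at t)" "smooth_on I f'"
proof -
  obtain G where G: "\<forall>v. smooth_on I (G v)" "\<forall>t\<in>I. (f has_derivative (\<lambda>v. G v t)) (at t)"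
    using smooth_on_derivs_in[OF assms] unfolding derivs_in_def by blast
  have "G v t = v * G 1 t" if "t \<in> I" for v t
    using linear_scale[OF has_derivative_linear[OF G(2)[rule_format, OF that]], of v 1] by simp
  then have "(f has_real_derivative G 1 t) (at t)" if "t \<in> I" for t
    using G(2) that unfolding has_field_derivative_def
    by (metis (no_types, lifting) ext mult.commute)
  with G(1) that show ?thesis by blast
qed

lemma smooth_on_inverse: "smooth_on {0<..} (inverse :: real \<Rightarrow> real)"
proof (rule smooth_on_real_derivatives[where d="\<lambda>n t. (-1)^n * fact n / t^(Suc n)"])
  fix n and t :: real assume t: "t \<in> {0<..}"
  have "((\<lambda>t. (-1)^n * fact n / t^(Suc n)) has_real_derivative
        (-1)^n * fact n * (- (real (Suc n) * t^n) / (t^(Suc n))^2)) (at t)"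
    using t by (auto intro!: derivative_eq_intros simp del: power_Suc simp: power2_eq_square)
  moreover have "(-1)^n * fact n * (- (real (Suc n) * t^n) / (t^(Suc n))^2)
      = (-1)^(Suc n) * fact (Suc n) / t^(Suc (Suc n))"
    using t by (simp add: field_simps power2_eq_square)
  ultimately show "((\<lambda>t. (-1)^n * fact n / t^(Suc n)) has_real_derivative
      (-1)^(Suc n) * fact (Suc n) / t^(Suc (Suc n))) (at t)"
    by simp
qed (simp add: field_simps)

section \<open>Algebras of smooth functions\<close>

inductive_set diff_alg :: "('a::real_normed_vector \<Rightarrow> real) set \<Rightarrow> 'a set \<Rightarrow> ('a \<Rightarrow> real) set"
  for B N where
  generator: "g \<in> B \<Longrightarrow> g \<in> diff_alg B N"
| const: "(\<lambda>x. c) \<in> diff_alg B N"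
| add: "f \<in> diff_alg B N \<Longrightarrow> g \<in> diff_alg B N \<Longrightarrow> (\<lambda>x. f x + g x) \<in> diff_alg B N"
| mult: "f \<in> diff_alg B N \<Longrightarrow> g \<in> diff_alg B N \<Longrightarrow> (\<lambda>x. f x * g x) \<in> diff_alg B N"
| comp_smooth: "f \<in> diff_alg B N \<Longrightarrow> open I \<Longrightarrow> f ` N \<subseteq> I \<Longrightarrow> smooth_on I \<psi> \<Longrightarrow>
    (\<lambda>x. \<psi> (f x)) \<in> diff_alg B N"

lemma diff_alg_diff:
  "f \<in> diff_alg B N \<Longrightarrow> g \<in> diff_alg B N \<Longrightarrow> (\<lambda>x. f x - g x) \<in> diff_alg B N"
  using diff_alg.add[OF _ diff_alg.mult[OF diff_alg.const[of "-1"]], of f B N g] by simp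

lemma diff_alg_derivs_in:
  assumes generators: "\<And>b. b \<in> B \<Longrightarrow> derivs_in (diff_alg B N) N b"
  shows "f \<in> diff_alg B N \<Longrightarrow> derivs_in (diff_alg B N) N f"
proof (induction rule: diff_alg.induct)
  case (generator g)
  then show ?case by (rule generators)
next
  case (const c)
  show ?case
    unfolding derivs_in_def by (intro exI[of _ "\<lambda>v x. 0"]) (auto intro: diff_alg.const)
next
  case (add f g)
  then obtain F G where F: "\<forall>v. F v \<in> diff_alg B N" "\<forall>x\<in>N. (f has_derivative (\<lambda>v. F v x)) (at x)"
    and G: "\<forall>v. G v \<in> diff_alg B N" "\<forall>x\<in>N. (g has_derivative (\<lambda>v. G v x)) (at x)"
    unfolding derivs_in_def by blast
  show ?case
    unfolding derivs_in_def using F G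
    by (intro exI[of _ "\<lambda>v x. F v x + G v x"]) (simp add: diff_alg.add)
next
  case (mult f g)
  then obtain F G where F: "\<forall>v. F v \<in> diff_alg B N" "\<forall>x\<in>N. (f has_derivative (\<lambda>v. F v x)) (at x)"
    and G: "\<forall>v. G v \<in> diff_alg B N" "\<forall>x\<in>N. (g has_derivative (\<lambda>v. G v x)) (at x)"
    unfolding derivs_in_def by blast
  have "(\<lambda>x. f x * G v x + F v x * g x) \<in> diff_alg B N" for v
    using mult.hyps F(1) G(1) by (simp add: diff_alg.add diff_alg.mult)
  moreover have "((\<lambda>x. f x * g x) has_derivative (\<lambda>v. f x * G v x + F v x * g x)) (at x)"
    if "x \<in> N" for x
    using F(2) G(2) that by (intro has_derivative_mult) auto
  ultimately show ?case
    unfolding derivs_in_def by (intro exI[of _ "\<lambda>v x. f x * G v x + F v x * g x"]) blast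
next
  case (comp_smooth f I \<psi>)
  then obtain F where F: "\<forall>v. F v \<in> diff_alg B N" "\<forall>x\<in>N. (f has_derivative (\<lambda>v. F v x)) (at x)"
    unfolding derivs_in_def by blast
  obtain \<psi>' where \<psi>': "\<And>t. t \<in> I \<Longrightarrow> (\<psi> has_real_derivative \<psi>' t) (at t)" "smooth_on I \<psi>'"
    using smooth_on_real_deriv[OF comp_smooth.hyps(4,2)] by blast
  have "(\<lambda>x. \<psi>' (f x) * F v x) \<in> diff_alg B N" for v
    using diff_alg.mult[OF diff_alg.comp_smooth[OF comp_smooth.hyps(1-3) \<psi>'(2)] F(1)[rule_format]] .
  moreover have "((\<lambda>x. \<psi> (f x)) has_derivative (\<lambda>v. \<psi>' (f x) * F v x)) (at x)"
    if "x \<in> N" for x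
    using has_derivative_compose[OF F(2)[rule_format, OF that]
        \<psi>'(1)[of "f x", unfolded has_field_derivative_def]] comp_smooth.hyps(3) that
    by auto
  ultimately show ?case
    unfolding derivs_in_def by (intro exI[of _ "\<lambda>v x. \<psi>' (f x) * F v x"]) blast
qed

lemma smooth_on_diff_alg:
  assumes "\<And>b. b \<in> B \<Longrightarrow> derivs_in (diff_alg B N) N b" and "f \<in> diff_alg B N"
  shows "smooth_on N f"
  using assms(2) by (rule smooth_on_if_derivs_closed) (rule diff_alg_derivs_in[OF assms(1)])

definition diff_alg_complex ::
    "('a::real_normed_vector \<Rightarrow> real) set \<Rightarrow> 'a set \<Rightarrow> ('a \<Rightarrow> complex) \<Rightarrow> bool"
  where "diff_alg_complex B N f \<longleftrightarrow> (\<lambda>x. Re (f x)) \<in> diff_alg B N \<and> (\<lambda>x. Im (f x)) \<in> diff_alg B N"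

lemma diff_alg_complex_const: "diff_alg_complex B N (\<lambda>x. c)"
  unfolding diff_alg_complex_def by (auto intro: diff_alg.const)

lemma diff_alg_complex_add:
  "diff_alg_complex B N f \<Longrightarrow> diff_alg_complex B N g \<Longrightarrow> diff_alg_complex B N (\<lambda>x. f x + g x)"
  unfolding diff_alg_complex_def by (auto intro: diff_alg.add)

lemma diff_alg_complex_mult:
  "diff_alg_complex B N f \<Longrightarrow> diff_alg_complex B N g \<Longrightarrow> diff_alg_complex B N (\<lambda>x. f x * g x)"
  unfolding diff_alg_complex_def by (auto intro!: diff_alg.add diff_alg.mult diff_alg_diff)

lemma diff_alg_complex_diff:
  "diff_alg_complex B N f \<Longrightarrow> diff_alg_complex B N g \<Longrightarrow> diff_alg_complex B N (\<lambda>x. f x - g x)"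
  unfolding diff_alg_complex_def by (auto intro: diff_alg_diff)

lemma diff_alg_complex_power:
  "diff_alg_complex B N f \<Longrightarrow> diff_alg_complex B N (\<lambda>x. f x ^ n)"
  by (induction n) (auto intro: diff_alg_complex_const diff_alg_complex_mult)

lemma diff_alg_complex_inverse:
  assumes f: "diff_alg_complex B N f" and nz: "\<And>x. x \<in> N \<Longrightarrow> f x \<noteq> 0"
  shows "diff_alg_complex B N (\<lambda>x. inverse (f x))"
proof -
  let ?r = "\<lambda>x. inverse ((Re (f x))\<^sup>2 + (Im (f x))\<^sup>2)"
  have "(\<lambda>x. (Re (f x))\<^sup>2 + (Im (f x))\<^sup>2) ` N \<subseteq> {0<..}"
    using nz by (auto simp: complex_eq_iff sum_power2_gt_zero_iff)
  then have "?r \<in> diff_alg B N"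
    using f unfolding diff_alg_complex_def power2_eq_square
    by (intro diff_alg.comp_smooth[OF _ open_greaterThan _ smooth_on_inverse]
        diff_alg.add diff_alg.mult) auto
  then show ?thesis
    using f unfolding diff_alg_complex_def
    by (auto simp: divide_inverse intro!: diff_alg.mult diff_alg_diff diff_alg.const
        intro: diff_alg.mult[OF diff_alg.const[of "-1"], simplified])
qed

lemma derivs_in_Re_Im:
  assumes "\<And>x. x \<in> N \<Longrightarrow> (g has_derivative (\<lambda>v. G v x)) (at x)"
    and "\<And>v. diff_alg_complex B N (G v)"
  shows "derivs_in (diff_alg B N) N (\<lambda>x. Re (g x))"
    and "derivs_in (diff_alg B N) N (\<lambda>x. Im (g x))"
proof -
  show "derivs_in (diff_alg B N) N (\<lambda>x. Re (g x))"
    unfolding derivs_in_def using assms(2)[unfolded diff_alg_complex_def]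
    by (intro exI[of _ "\<lambda>v x. Re (G v x)"] conjI allI ballI has_derivative_Re assms(1)) auto
  show "derivs_in (diff_alg B N) N (\<lambda>x. Im (g x))"
    unfolding derivs_in_def using assms(2)[unfolded diff_alg_complex_def]
    by (intro exI[of _ "\<lambda>v x. Im (G v x)"] conjI allI ballI has_derivative_Im assms(1)) auto
qed

section \<open>A smooth step function\<close>

primrec flat_poly :: "nat \<Rightarrow> real poly" where
  "flat_poly 0 = 1"
| "flat_poly (Suc n) = [:0, 0, 1:] * (flat_poly n - pderiv (flat_poly n))"

text \<open>\<^term>\<open>flat n\<close> is the \<open>n\<close>-th derivative of \<open>exp (- 1 / t)\<close> for \<open>t > 0\<close>, extended by 0.\<close>

definition flat :: "nat \<Rightarrow> real \<Rightarrow> real" where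
  "flat n t = (if t \<le> 0 then 0 else poly (flat_poly n) (1 / t) * exp (- (1 / t)))"

lemma poly_div_exp_tendsto_0: "((\<lambda>s. poly P s / exp s) \<longlongrightarrow> (0::real)) at_top"
proof -
  have "((\<lambda>s. \<Sum>i\<le>degree P. coeff P i * (s ^ i / exp s)) \<longlongrightarrow> (0::real)) at_top"
    by (intro tendsto_null_sum tendsto_mult_right_zero tendsto_power_div_exp_0)
  then show ?thesis
    by (simp add: poly_altdef sum_divide_distrib)
qed

lemma has_real_derivative_flat_pos:
  assumes "t > 0"
  shows "(flat n has_real_derivative flat (Suc n) t) (at t)"
proof -
  have "((\<lambda>t. poly (flat_poly n) (1 / t) * exp (- (1 / t))) has_real_derivative
      poly (pderiv (flat_poly n)) (1 / t) * (- 1 / t\<^sup>2) * exp (- (1 / t))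
      + poly (flat_poly n) (1 / t) * (exp (- (1 / t)) * (1 / t\<^sup>2))) (at t)"
    using assms by (auto intro!: derivative_eq_intros simp: power2_eq_square field_simps)
  also have "poly (pderiv (flat_poly n)) (1 / t) * (- 1 / t\<^sup>2) * exp (- (1 / t))
      + poly (flat_poly n) (1 / t) * (exp (- (1 / t)) * (1 / t\<^sup>2)) = flat (Suc n) t"
    using assms by (simp add: flat_def algebra_simps power2_eq_square)
  finally show ?thesis
    by (rule has_field_derivative_transform_within_open[OF _ open_greaterThan[of 0]])
      (use assms in \<open>auto simp: flat_def\<close>)
qed

lemma has_real_derivative_flat_0: "(flat n has_real_derivative 0) (at 0)"
proof -
  have "((\<lambda>y. (flat n y - flat n 0) / (y - 0)) \<longlongrightarrow> 0) (at_left 0)"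
  proof (rule Lim_transform_eventually[OF tendsto_const])
    show "\<forall>\<^sub>F y in at_left 0. 0 = (flat n y - flat n 0) / (y - 0)"
      unfolding eventually_at_left_field by (auto intro!: exI[of _ "-1"] simp: flat_def)
  qed
  moreover have "((\<lambda>y. (flat n y - flat n 0) / (y - 0)) \<longlongrightarrow> 0) (at_right 0)"
    unfolding filterlim_at_right_to_top
  proof (rule Lim_transform_eventually[OF poly_div_exp_tendsto_0[of "[:0, 1:] * flat_poly n"]])
    show "\<forall>\<^sub>F s in at_top. poly ([:0, 1:] * flat_poly n) s / exp s
        = (flat n (inverse s) - flat n 0) / (inverse s - 0)"
      using eventually_gt_at_top[of 0] by eventually_elim (simp add: flat_def field_simps exp_minus)
  qed
  ultimately show ?thesis
    by (simp add: has_field_derivative_iff filterlim_split_at)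
qed

lemma has_real_derivative_flat: "(flat n has_real_derivative flat (Suc n) t) (at t)"
proof -
  consider "t > 0" | "t = 0" | "t < 0" by fastforce
  then show ?thesis
  proof cases
    case 3
    have "(flat n has_real_derivative 0) (at t)"
      by (rule has_field_derivative_transform_within_open[OF DERIV_const open_lessThan[of 0]])
        (use 3 in \<open>auto simp: flat_def\<close>)
    with 3 show ?thesis
      by (simp add: flat_def)
  qed (use has_real_derivative_flat_pos has_real_derivative_flat_0 in \<open>auto simp: flat_def\<close>)
qed

definition smooth_step :: "real \<Rightarrow> real" where
  "smooth_step t = flat 0 t / (flat 0 t + flat 0 (1 - t))"

lemma smooth_on_smooth_step: "smooth_on UNIV smooth_step"
proof -
  let ?B = "{\<lambda>t::real. t}"
  have generator: "derivs_in (diff_alg ?B UNIV) UNIV b" if "b \<in> ?B" for b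
    using that unfolding derivs_in_def by (intro exI[of _ "\<lambda>v x. v"]) (auto intro: diff_alg.const)
  have flat_smooth: "smooth_on UNIV (flat 0)"
    by (rule smooth_on_real_derivatives[where d=flat]) (auto intro: has_real_derivative_flat)
  have id: "(\<lambda>t. t) \<in> diff_alg ?B UNIV"
    by (rule diff_alg.generator) simp
  have num: "(\<lambda>t. flat 0 t) \<in> diff_alg ?B UNIV"
    using diff_alg.comp_smooth[OF id open_UNIV _ flat_smooth] by simp
  have "(\<lambda>t. 1 - t) \<in> diff_alg ?B UNIV"
    by (rule diff_alg_diff[OF diff_alg.const id])
  then have "(\<lambda>t. flat 0 (1 - t)) \<in> diff_alg ?B UNIV"
    using diff_alg.comp_smooth[OF _ open_UNIV _ flat_smooth] by simp
  then have den: "(\<lambda>t. flat 0 t + flat 0 (1 - t)) \<in> diff_alg ?B UNIV"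
    by (rule diff_alg.add[OF num])
  have "flat 0 t + flat 0 (1 - t) > 0" for t
    by (cases "t > 0") (auto simp: flat_def add_pos_nonneg add_nonneg_pos)
  then have "smooth_step \<in> diff_alg ?B UNIV"
    unfolding smooth_step_def divide_inverse
    by (intro diff_alg.mult[OF num]
        diff_alg.comp_smooth[OF den open_greaterThan _ smooth_on_inverse]) auto
  with generator show ?thesis
    by (rule smooth_on_diff_alg)
qed

lemma smooth_step_eq_0: "t \<le> 0 \<Longrightarrow> smooth_step t = 0"
  by (simp add: smooth_step_def flat_def)

lemma smooth_step_eq_1: "t \<ge> 1 \<Longrightarrow> smooth_step t = 1"
  by (simp add: smooth_step_def flat_def)

lemma has_real_derivative_smooth_step:
  "(smooth_step has_real_derivative deriv smooth_step t) (at t)"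
proof -
  obtain s' where s': "\<And>t. (smooth_step has_real_derivative s' t) (at t)"
    using smooth_on_real_deriv[OF smooth_on_smooth_step open_UNIV] by auto
  have "deriv smooth_step t = s' t"
    by (rule DERIV_imp_deriv[OF s'])
  with s' show ?thesis
    by simp
qed

lemma bounded_deriv_smooth_step: "\<exists>M. \<forall>t. \<bar>deriv smooth_step t\<bar> \<le> M"
proof -
  obtain s' where s': "\<And>t. (smooth_step has_real_derivative s' t) (at t)" "smooth_on UNIV s'"
    using smooth_on_real_deriv[OF smooth_on_smooth_step open_UNIV] by auto
  have deriv_eq: "deriv smooth_step = s'"
    using DERIV_imp_deriv[OF s'(1)] by blast
  have "continuous_on {0..1} s'"
    using continuous_on_subset[OF smooth_on_imp_continuous_on[OF s'(2) open_UNIV]] by blast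
  then have "bounded (s' ` {0..1})"
    by (intro compact_imp_bounded compact_continuous_image compact_Icc)
  then obtain M where M: "\<forall>t\<in>{0..1}. \<bar>s' t\<bar> \<le> M"
    unfolding bounded_iff by auto
  have "s' t = 0" if "t \<notin> {0..1}" for t
  proof -
    have "(smooth_step has_real_derivative 0) (at t)"
    proof (cases "t < 0")
      case True
      then show ?thesis
        by (intro has_field_derivative_transform_within_open[OF DERIV_const open_lessThan[of 0]])
          (auto simp: smooth_step_eq_0)
    next
      case False
      with that have "t > 1" by simp
      then show ?thesis
        by (intro has_field_derivative_transform_within_open[OF DERIV_const open_greaterThan[of 1]])
          (auto simp: smooth_step_eq_1)
    qed
    then show ?thesis
      using s'(1) DERIV_unique by blast
  qed
  with M have "\<bar>s' t\<bar> \<le> max M 0" for t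
    by (cases "t \<in> {0..1}") fastforce+
  then show ?thesis
    unfolding deriv_eq by blast
qed

section \<open>The form \<open>\<tau>\<close> and its local primitives\<close>

lemma off_axes_iff: "z \<in> off_axes \<longleftrightarrow> fst z \<noteq> 0 \<and> snd z \<noteq> 0"
  by (simp add: off_axes_def)

lemma open_off_axes: "open off_axes"
  unfolding off_axes_def by (intro open_Collect_neq continuous_intros)

lemma has_derivative_ln_norm:
  fixes w :: complex
  assumes "w \<noteq> 0"
  shows "((\<lambda>w. ln (cmod w)) has_derivative (\<lambda>v. Re (v / w))) (at w)"
proof -
  have deriv: "((\<lambda>w. ln (cmod w)) has_derivative (\<lambda>v. (v \<bullet> sgn w) / cmod w)) (at w)"
    using assms by (auto intro!: derivative_eq_intros has_derivative_norm simp: field_simps)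
  have "cmod w * cmod w = Im w * Im w + Re w * Re w"
    using cmod_power2[of w] by (simp add: power2_eq_square)
  then have "(v \<bullet> sgn w) / cmod w = Re (v / w)" for v
    using assms by (simp add: inner_complex_def Re_divide sgn_div_norm power2_eq_square field_simps)
  with deriv show ?thesis
    by simp
qed

lemma has_derivative_ln_norm_fst:
  assumes "z \<in> off_axes"
  shows "((\<lambda>z. ln (cmod (fst z))) has_derivative (\<lambda>v. Re (fst v / fst z))) (at z)"
  using has_derivative_compose[OF has_derivative_fst[OF has_derivative_ident]
      has_derivative_ln_norm] assms
  unfolding off_axes_iff by blast

lemma power_pred_eq_divide:
  "x \<noteq> 0 \<Longrightarrow> 0 < n \<Longrightarrow> (x::'a::field) ^ (n - Suc 0) = x ^ n / x"
  by (simp add: power_diff)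

text \<open>A branch of the logarithm with its cut along the positive reals; unlike \<^const>\<open>Ln\<close>
  it is continuous across the negative real axis.\<close>

definition Ln_pos_cut :: "complex \<Rightarrow> complex" where
  "Ln_pos_cut w = Ln (- w) + \<i> * of_real pi"

lemma has_field_derivative_Ln_pos_cut:
  assumes "Re w < 0"
  shows "(Ln_pos_cut has_field_derivative inverse w) (at w)"
proof -
  have "- w \<notin> \<real>\<^sub>\<le>\<^sub>0"
    using assms by (auto simp: complex_nonpos_Reals_iff)
  then have "((\<lambda>w. Ln (- w) + \<i> * of_real pi) has_field_derivative inverse (- w) * (- 1) + 0)
      (at w)"
    by (auto intro!: derivative_eq_intros)
  then show ?thesis
    unfolding Ln_pos_cut_def[abs_def] by simp
qed

lemma has_field_derivative_Ln_off_cut: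
  "Im w \<noteq> 0 \<or> Re w > 0 \<Longrightarrow> (Ln has_field_derivative inverse w) (at w)"
  by (rule has_field_derivative_Ln) (auto simp: complex_nonpos_Reals_iff)

lemma Ln_pos_cut_lower:
  assumes "Im w < 0"
  shows "Ln_pos_cut w = Ln w + 2 * of_real pi * \<i>"
proof -
  have "w \<noteq> 0"
    using assms by auto
  with assms show ?thesis
    using Ln_minus[of w] by (simp add: Ln_pos_cut_def algebra_simps)
qed

lemma Ln_pos_cut_upper:
  assumes "Im w > 0 \<or> (Im w = 0 \<and> Re w < 0)"
  shows "Ln_pos_cut w = Ln w"
proof -
  have "w \<noteq> 0"
    using assms by auto
  with assms show ?thesis
    using Ln_minus[of w] by (auto simp: Ln_pos_cut_def)
qed

locale resonant_form =
  fixes p q k :: nat and \<mu> :: complex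
  assumes p_pos: "0 < p" and q_pos: "0 < q" and k_pos: "0 < k"
begin

definition u :: "complex \<times> complex \<Rightarrow> complex" where
  "u z = (fst z ^ p * snd z ^ q) ^ k"

definition dlog :: "complex \<times> complex \<Rightarrow> complex \<times> complex \<Rightarrow> complex" where
  "dlog z v = of_nat p * fst v / fst z + of_nat q * snd v / snd z"

lemma continuous_on_u [continuous_intros]: "continuous_on A u"
  unfolding u_def by (intro continuous_intros)

lemma u_nonzero: "z \<in> off_axes \<Longrightarrow> u z \<noteq> 0"
  by (simp add: u_def off_axes_def)

lemma has_derivative_u:
  assumes "z \<in> off_axes"
  shows "(u has_derivative (\<lambda>v. of_nat k * u z * dlog z v)) (at z)"
  using assms p_pos q_pos k_pos unfolding u_def off_axes_iff
  by (auto intro!: derivative_eq_intros simp: power_pred_eq_divide dlog_def field_simps)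

lemma tau_eq:
  assumes "z \<in> off_axes"
  shows "tau p q k \<mu> z v = (\<mu> + inverse (u z)) * dlog z v - of_nat p * fst v / fst z"
  using assms unfolding tau_def u_def dlog_def Let_def off_axes_iff
  using p_pos q_pos k_pos by (simp add: power_pred_eq_divide field_simps)

definition potential :: "(complex \<Rightarrow> complex) \<Rightarrow> complex \<times> complex \<Rightarrow> complex" where
  "potential L z = (\<mu> * L (u z) - inverse (u z)) / of_nat k"

definition primitive :: "(complex \<Rightarrow> complex) \<Rightarrow> complex \<times> complex \<Rightarrow> real" where
  "primitive L z = Re (potential L z) - real p * ln (cmod (fst z))"

lemma has_derivative_log_u:
  assumes "z \<in> off_axes" and "(L has_field_derivative inverse (u z)) (at (u z))"
  shows "((\<lambda>z. L (u z)) has_derivative (\<lambda>v. of_nat k * dlog z v)) (at z)"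
  using has_derivative_compose[OF has_derivative_u[OF assms(1)]
      assms(2)[unfolded has_field_derivative_def]] u_nonzero[OF assms(1)]
  by (simp add: field_simps)

lemma has_derivative_potential:
  assumes "z \<in> off_axes" and "(L has_field_derivative inverse (u z)) (at (u z))"
  shows "(potential L has_derivative (\<lambda>v. (\<mu> + inverse (u z)) * dlog z v)) (at z)"
  unfolding potential_def[abs_def]
  using assms u_nonzero[OF assms(1)] k_pos
  by (auto intro!: derivative_eq_intros has_derivative_log_u has_derivative_u simp: field_simps)

lemma has_derivative_primitive:
  assumes "z \<in> off_axes" and "(L has_field_derivative inverse (u z)) (at (u z))"
  shows "(primitive L has_derivative re_tau p q k \<mu> z) (at z)"
proof -
  have "(primitive L has_derivative
      (\<lambda>v. Re ((\<mu> + inverse (u z)) * dlog z v) - real p * Re (fst v / fst z))) (at z)"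
    unfolding primitive_def[abs_def] using assms
    by (intro has_derivative_diff has_derivative_Re has_derivative_potential
        has_derivative_mult_right has_derivative_ln_norm_fst)
  moreover have "re_tau p q k \<mu> z =
      (\<lambda>v. Re ((\<mu> + inverse (u z)) * dlog z v) - real p * Re (fst v / fst z))"
  proof
    fix v :: "complex \<times> complex"
    have "Re (of_nat p * fst v / fst z) = real p * Re (fst v / fst z)"
      by (simp add: Re_divide algebra_simps)
    then show "re_tau p q k \<mu> z v =
        Re ((\<mu> + inverse (u z)) * dlog z v) - real p * Re (fst v / fst z)"
      unfolding re_tau_def tau_eq[OF assms(1)] minus_complex.sel by (simp only:)
  qed
  ultimately show ?thesis
    by (simp only:)
qed

lemma re_tau_nonzero:
  assumes "z \<in> off_axes" and "\<mu> + inverse (u z) \<noteq> 0"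
  shows "\<exists>v. re_tau p q k \<mu> z v \<noteq> 0"
proof -
  define w where "w = \<mu> + inverse (u z)"
  define v where "v = (0::complex, snd z * cnj w)"
  have "tau p q k \<mu> z v = of_nat q * (w * cnj w)"
    using assms(1) unfolding tau_eq[OF assms(1)] by (simp add: v_def w_def dlog_def off_axes_iff)
  then have "re_tau p q k \<mu> z v = real q * (cmod w)\<^sup>2"
    unfolding re_tau_def complex_norm_square[symmetric] by simp
  moreover have "cmod w > 0"
    using assms(2) by (simp add: w_def)
  ultimately show ?thesis
    using q_pos by (intro exI[of _ v]) simp
qed

definition generators :: "(complex \<Rightarrow> complex) \<Rightarrow> (complex \<times> complex \<Rightarrow> real) set" where
  "generators L = (\<lambda>g z. Re (g z)) ` {fst, snd, \<lambda>z. L (u z)}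
     \<union> (\<lambda>g z. Im (g z)) ` {fst, snd, \<lambda>z. L (u z)} \<union> {\<lambda>z. ln (cmod (fst z))}"

lemma diff_alg_complex_generators:
  "diff_alg_complex (generators L) N fst" "diff_alg_complex (generators L) N snd"
  "diff_alg_complex (generators L) N (\<lambda>z. L (u z))"
  unfolding diff_alg_complex_def by (auto intro!: diff_alg.generator simp: generators_def)

lemma diff_alg_complex_inverse_coordinates:
  assumes "N \<subseteq> off_axes"
  shows "diff_alg_complex (generators L) N (\<lambda>z. inverse (fst z))"
    "diff_alg_complex (generators L) N (\<lambda>z. inverse (snd z))"
  using assms
  by (auto intro!: diff_alg_complex_inverse diff_alg_complex_generators simp: off_axes_iff)

lemma diff_alg_complex_dlog:
  assumes "N \<subseteq> off_axes"
  shows "diff_alg_complex (generators L) N (\<lambda>z. dlog z v)"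
  unfolding dlog_def divide_inverse
  by (intro diff_alg_complex_add diff_alg_complex_mult diff_alg_complex_const
      diff_alg_complex_inverse_coordinates[OF assms])

lemma generators_derivs_in:
  assumes N: "N \<subseteq> off_axes"
    and L: "\<And>z. z \<in> N \<Longrightarrow> (L has_field_derivative inverse (u z)) (at (u z))"
    and "b \<in> generators L"
  shows "derivs_in (diff_alg (generators L) N) N b"
proof -
  have "derivs_in (diff_alg (generators L) N) N (\<lambda>z. Re (fst z))"
      "derivs_in (diff_alg (generators L) N) N (\<lambda>z. Im (fst z))"
    by (rule derivs_in_Re_Im[where G="\<lambda>v z. fst v"];
        auto intro: has_derivative_fst has_derivative_ident diff_alg_complex_const)+
  moreover have "derivs_in (diff_alg (generators L) N) N (\<lambda>z. Re (snd z))"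
      "derivs_in (diff_alg (generators L) N) N (\<lambda>z. Im (snd z))"
    by (rule derivs_in_Re_Im[where G="\<lambda>v z. snd v"];
        auto intro: has_derivative_snd has_derivative_ident diff_alg_complex_const)+
  moreover have "derivs_in (diff_alg (generators L) N) N (\<lambda>z. Re (L (u z)))"
      "derivs_in (diff_alg (generators L) N) N (\<lambda>z. Im (L (u z)))"
    using N L
    by (auto intro!: derivs_in_Re_Im[where G="\<lambda>v z. of_nat k * dlog z v"] has_derivative_log_u
        diff_alg_complex_mult diff_alg_complex_const diff_alg_complex_dlog)
  moreover have "derivs_in (diff_alg (generators L) N) N (\<lambda>z. ln (cmod (fst z)))"
  proof -
    have "(\<lambda>z. Re (fst v / fst z)) \<in> diff_alg (generators L) N" for v :: "complex \<times> complex"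
      using diff_alg_complex_mult[OF diff_alg_complex_const
          diff_alg_complex_inverse_coordinates(1)[OF N]]
      unfolding diff_alg_complex_def divide_inverse by blast
    then show ?thesis
      using has_derivative_ln_norm_fst N unfolding derivs_in_def
      by (intro exI[of _ "\<lambda>v z. Re (fst v / fst z)"]) blast
  qed
  ultimately show ?thesis
    using \<open>b \<in> generators L\<close> unfolding generators_def by blast
qed

lemma primitive_in_diff_alg:
  assumes "N \<subseteq> off_axes"
  shows "primitive L \<in> diff_alg (generators L) N"
proof -
  have "diff_alg_complex (generators L) N (\<lambda>z. inverse (u z))"
    using assms u_nonzero unfolding u_def
    by (intro diff_alg_complex_inverse diff_alg_complex_power diff_alg_complex_mult
        diff_alg_complex_generators) (auto simp: u_def)
  then have "diff_alg_complex (generators L) N (potential L)"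
    unfolding potential_def[abs_def] divide_inverse
    by (intro diff_alg_complex_mult diff_alg_complex_diff diff_alg_complex_const
        diff_alg_complex_generators)
  moreover have "(\<lambda>z. ln (cmod (fst z))) \<in> diff_alg (generators L) N"
    by (rule diff_alg.generator) (simp add: generators_def)
  ultimately show ?thesis
    unfolding primitive_def[abs_def] diff_alg_complex_def
    by (intro diff_alg_diff diff_alg.mult diff_alg.const) auto
qed

lemma smooth_on_primitive:
  assumes "N \<subseteq> off_axes"
    and "\<And>z. z \<in> N \<Longrightarrow> (L has_field_derivative inverse (u z)) (at (u z))"
  shows "smooth_on N (primitive L)"
    and "smooth_on N (\<lambda>z. primitive L z - c * smooth_step (primitive L z / d))"
proof -
  have generators: "\<And>b. b \<in> generators L \<Longrightarrow> derivs_in (diff_alg (generators L) N) N b"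
    using generators_derivs_in[OF assms] .
  have h: "primitive L \<in> diff_alg (generators L) N"
    by (rule primitive_in_diff_alg[OF assms(1)])
  with generators show "smooth_on N (primitive L)"
    by (rule smooth_on_diff_alg)
  have "(\<lambda>z. primitive L z - c * smooth_step (primitive L z / d)) \<in> diff_alg (generators L) N"
    using diff_alg.comp_smooth[OF diff_alg.mult[OF h diff_alg.const[of "inverse d"]] open_UNIV
        subset_UNIV smooth_on_smooth_step]
    by (intro diff_alg_diff[OF h] diff_alg.mult[OF diff_alg.const]) (simp add: divide_inverse)
  with generators show "smooth_on N (\<lambda>z. primitive L z - c * smooth_step (primitive L z / d))"
    by (rule smooth_on_diff_alg)
qed


definition monodromy :: real where
  "monodromy = 2 * pi * Im \<mu> / real k"

lemma primitive_Ln_pos_cut_lower: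
  assumes "Im (u z) < 0"
  shows "primitive Ln_pos_cut z = primitive Ln z - monodromy"
proof -
  have "potential Ln_pos_cut z = potential Ln z + \<mu> * (2 * of_real pi * \<i>) / of_nat k"
    by (simp add: potential_def Ln_pos_cut_lower[OF assms] algebra_simps add_divide_distrib
        diff_divide_distrib)
  then show ?thesis
    by (simp add: primitive_def monodromy_def)
qed

lemma primitive_Ln_pos_cut_upper:
  "Im (u z) > 0 \<or> (Im (u z) = 0 \<and> Re (u z) < 0) \<Longrightarrow> primitive Ln_pos_cut z = primitive Ln z"
  by (simp add: primitive_def potential_def Ln_pos_cut_upper)

lemma primitive_Ln_pos_real:
  assumes "u z = of_real r" "r > 0"
  shows "primitive Ln z = (Re \<mu> * ln r - 1 / r) / real k - real p * ln (cmod (fst z))"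
proof -
  have "potential Ln z = (\<mu> * of_real (ln r) - of_real (1 / r)) / of_nat k"
    using assms by (simp add: potential_def Ln_of_real inverse_eq_divide)
  then show ?thesis
    by (simp add: primitive_def)
qed

lemma primitive_Ln_pos_cut_neg_real:
  assumes "u z = - of_real r" "r > 0"
  shows "primitive Ln_pos_cut z =
    (Re \<mu> * ln r - pi * Im \<mu> + 1 / r) / real k - real p * ln (cmod (fst z))"
proof -
  have "potential Ln_pos_cut z =
      (\<mu> * (of_real (ln r) + \<i> * of_real pi) + of_real (1 / r)) / of_nat k"
    using assms by (simp add: potential_def Ln_pos_cut_def Ln_of_real inverse_eq_divide)
  then show ?thesis
    by (simp add: primitive_def algebra_simps)
qed

lemma small_radius_exists:
  "\<exists>\<epsilon>>0. \<forall>r. 0 < r \<and> r < \<epsilon> \<longrightarrow> (Re \<mu> - 1) * ln r - 1 / r < 0 \<and>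
     real k * c < Re \<mu> * ln r - pi * Im \<mu> + 1 / r \<and> cmod \<mu> < 1 / r"
proof -
  have "\<forall>\<^sub>F r in at_right 0. (Re \<mu> - 1) * ln r - 1 / r < 0 \<and>
      real k * c < Re \<mu> * ln r - pi * Im \<mu> + 1 / r \<and> cmod \<mu> < 1 / r"
    by (intro eventually_conj; real_asymp)
  then show ?thesis
    unfolding eventually_at_right_field by auto
qed

lemma ln_norm_bounds:
  assumes "0 < cmod (fst z)" "cmod (fst z) < 1" "0 < cmod (snd z)" "cmod (snd z) < 1"
  shows "ln (cmod (u z)) \<le> real k * (real p * ln (cmod (fst z)))"
    and "real p * ln (cmod (fst z)) \<le> 0"
proof -
  have "ln (cmod (u z)) = real k * (real p * ln (cmod (fst z)) + real q * ln (cmod (snd z)))"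
    using assms by (simp add: u_def norm_mult norm_power ln_mult ln_realpow)
  moreover have "ln (cmod (snd z)) < 0" "ln (cmod (fst z)) < 0"
    using assms by auto
  ultimately show "ln (cmod (u z)) \<le> real k * (real p * ln (cmod (fst z)))"
    "real p * ln (cmod (fst z)) \<le> 0"
    by (simp_all add: mult_left_mono mult_nonneg_nonpos)
qed

end

section \<open>Gluing the branches\<close>

text \<open>The smallness conditions on \<open>r = |u|\<close> make the \<^const>\<open>Ln\<close>-primitive negative near
  \<open>u > 0\<close>, the \<^const>\<open>Ln_pos_cut\<close>-primitive exceed \<open>W + |monodromy|\<close> near \<open>u < 0\<close>,
  and \<open>\<mu> + 1 / u\<close> nonzero.\<close>

locale resonant_form_gluing = resonant_form +
  fixes W \<epsilon> :: real
  assumes deriv_step_bound: "\<And>t. \<bar>monodromy * deriv smooth_step t\<bar> < W"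
    and eps_pos: "0 < \<epsilon>"
    and small_radius: "\<And>r. 0 < r \<Longrightarrow> r < \<epsilon> \<Longrightarrow> (Re \<mu> - 1) * ln r - 1 / r < 0 \<and>
      real k * (W + \<bar>monodromy\<bar>) < Re \<mu> * ln r - pi * Im \<mu> + 1 / r \<and> cmod \<mu> < 1 / r"
begin

definition U :: "(complex \<times> complex) set" where
  "U = {z. cmod (fst z) < 1 \<and> cmod (snd z) < 1 \<and> cmod (u z) < \<epsilon>}"

definition F :: "complex \<times> complex \<Rightarrow> real" where
  "F z = (if Im (u z) < 0 then primitive Ln z - monodromy * smooth_step (primitive Ln z / W)
          else primitive Ln z)"

definition regular_at :: "complex \<times> complex \<Rightarrow> bool" where
  "regular_at z \<longleftrightarrow> (\<exists>N \<kappa>. open N \<and> z \<in> N \<and> smooth_on N F \<and> \<kappa> \<noteq> 0 \<and>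
     (F has_derivative (\<lambda>v. \<kappa> * re_tau p q k \<mu> z v)) (at z))"

lemma W_pos: "0 < W"
  using deriv_step_bound[of 0] by linarith

lemma open_U: "open U"
  unfolding U_def by (intro open_Collect_conj open_Collect_less continuous_intros)

lemma zero_in_U: "(0, 0) \<in> U"
  using eps_pos p_pos k_pos by (simp add: U_def u_def power_0_left)

lemma open_domain: "open (U \<inter> off_axes)"
  by (intro open_Int open_U open_off_axes)

lemma domain_bounds:
  assumes "z \<in> U \<inter> off_axes"
  shows "0 < cmod (fst z)" "cmod (fst z) < 1" "0 < cmod (snd z)" "cmod (snd z) < 1"
    "0 < cmod (u z)" "cmod (u z) < \<epsilon>"
  using assms u_nonzero by (auto simp: U_def off_axes_iff)

lemma regular_atI:
  assumes "open N" "smooth_on N g" "(g has_derivative (\<lambda>v. \<kappa> * re_tau p q k \<mu> z v)) (at z)"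
    and "\<kappa> \<noteq> 0" "z \<in> N" "\<And>y. y \<in> N \<Longrightarrow> g y = F y"
  shows "regular_at z"
  unfolding regular_at_def
proof (intro exI conjI)
  show "smooth_on N F"
    using assms(2,6) by (rule smooth_on_cong)
  show "(F has_derivative (\<lambda>v. \<kappa> * re_tau p q k \<mu> z v)) (at z)"
    using assms(3,1,5) by (rule has_derivative_transform_within_open) (use assms(6) in auto)
qed (use assms in auto)

lemma regular_at_if_F_eq_primitive:
  assumes "open A" "A \<subseteq> U \<inter> off_axes" "z \<in> A"
    and L: "\<And>y. y \<in> A \<Longrightarrow> (L has_field_derivative inverse (u y)) (at (u y))"
    and "open T" "primitive L z \<in> T"
    and F_eq: "\<And>y. y \<in> A \<Longrightarrow> primitive L y \<in> T \<Longrightarrow> F y = primitive L y"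
  shows "regular_at z"
proof -
  define N where "N = A \<inter> primitive L -` T"
  have smooth: "smooth_on A (primitive L)"
    using assms(2) L by (intro smooth_on_primitive) auto
  have "open N"
    unfolding N_def
    using smooth_on_imp_continuous_on[OF smooth \<open>open A\<close>] \<open>open A\<close> \<open>open T\<close>
    by (rule continuous_open_preimage)
  moreover have "smooth_on N (primitive L)"
    using smooth by (rule smooth_on_subset) (simp add: N_def)
  moreover have "(primitive L has_derivative (\<lambda>v. 1 * re_tau p q k \<mu> z v)) (at z)"
    using has_derivative_primitive[OF _ L[OF \<open>z \<in> A\<close>]] assms(2,3) by auto
  ultimately show ?thesis
    by (rule regular_atI) (use assms(3,6) F_eq in \<open>auto simp: N_def\<close>)
qed

lemma regular_at_upper:
  assumes "z \<in> U \<inter> off_axes" and "Im (u z) > 0"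
  shows "regular_at z"
proof (rule regular_at_if_F_eq_primitive[where A="U \<inter> off_axes \<inter> {z. Im (u z) > 0}"
      and T=UNIV])
  show "open (U \<inter> off_axes \<inter> {z. Im (u z) > 0})"
    by (intro open_Int open_domain open_Collect_less continuous_intros)
qed (use assms in \<open>auto intro: has_field_derivative_Ln_off_cut simp: F_def\<close>)

lemma regular_at_lower:
  assumes z: "z \<in> U \<inter> off_axes" and lower: "Im (u z) < 0"
  shows "regular_at z"
proof -
  define N where "N = U \<inter> off_axes \<inter> {z. Im (u z) < 0}"
  define g where "g y = primitive Ln y - monodromy * smooth_step (primitive Ln y / W)" for y
  define \<kappa> where "\<kappa> = 1 - monodromy * deriv smooth_step (primitive Ln z / W) / W"
  have Ln: "(Ln has_field_derivative inverse (u y)) (at (u y))" if "y \<in> N" for y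
    using that by (intro has_field_derivative_Ln_off_cut) (simp add: N_def)
  have "open N"
    unfolding N_def by (intro open_Int open_domain open_Collect_less continuous_intros)
  moreover have "smooth_on N g"
    unfolding g_def[abs_def] using Ln by (intro smooth_on_primitive) (auto simp: N_def)
  moreover have "(g has_derivative (\<lambda>v. \<kappa> * re_tau p q k \<mu> z v)) (at z)"
  proof -
    have dh: "(primitive Ln has_derivative re_tau p q k \<mu> z) (at z)"
      using has_derivative_primitive[OF _ Ln] z lower by (simp add: N_def)
    have "((\<lambda>y. primitive Ln y / W) has_derivative (\<lambda>v. re_tau p q k \<mu> z v / W)) (at z)"
      using dh W_pos by (auto intro!: derivative_eq_intros)
    from has_derivative_compose[OF this
        has_real_derivative_smooth_step[unfolded has_field_derivative_def]]
    have "(g has_derivative (\<lambda>v. re_tau p q k \<mu> z v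
        - monodromy * (deriv smooth_step (primitive Ln z / W) * (re_tau p q k \<mu> z v / W)))) (at z)"
      unfolding g_def[abs_def] by (intro has_derivative_diff dh has_derivative_mult_right)
    then show ?thesis
      by (simp add: \<kappa>_def algebra_simps)
  qed
  moreover have "\<kappa> \<noteq> 0"
  proof -
    have "\<bar>monodromy * deriv smooth_step (primitive Ln z / W) / W\<bar> < 1"
      using deriv_step_bound W_pos by (simp add: abs_mult)
    then show ?thesis
      unfolding \<kappa>_def by auto
  qed
  ultimately show ?thesis
    by (rule regular_atI) (use z lower in \<open>auto simp: N_def F_def g_def\<close>)
qed

lemma primitive_Ln_neg_at_pos_real:
  assumes z: "z \<in> U \<inter> off_axes" and real: "Im (u z) = 0" "Re (u z) > 0"
  shows "primitive Ln z < 0"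
proof -
  define r where "r = Re (u z)"
  have u: "u z = of_real r"
    using real by (simp add: r_def complex_eq_iff)
  have r: "0 < r" "r < \<epsilon>"
    using real domain_bounds(6)[OF z] u by auto
  have "ln r \<le> real k * (real p * ln (cmod (fst z)))"
    using ln_norm_bounds(1)[OF domain_bounds(1-4)[OF z]] u r by simp
  moreover have "(Re \<mu> - 1) * ln r - 1 / r < 0"
    using small_radius[OF r] by blast
  ultimately show ?thesis
    unfolding primitive_Ln_pos_real[OF u r(1)] using k_pos by (simp add: field_simps)
qed

lemma F_eq_primitive_Ln: "primitive Ln y \<le> 0 \<Longrightarrow> F y = primitive Ln y"
  using W_pos by (simp add: F_def smooth_step_eq_0 divide_nonpos_pos)

lemma regular_at_pos_real:
  assumes "z \<in> U \<inter> off_axes" and "Im (u z) = 0" "Re (u z) > 0"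
  shows "regular_at z"
proof (rule regular_at_if_F_eq_primitive[where A="U \<inter> off_axes \<inter> {z. Re (u z) > 0}"
      and T="{..<0}"])
  show "open (U \<inter> off_axes \<inter> {z. Re (u z) > 0})"
    by (intro open_Int open_domain open_Collect_less continuous_intros)
  show "primitive Ln z \<in> {..<0}"
    using primitive_Ln_neg_at_pos_real[OF assms] by simp
qed (use assms F_eq_primitive_Ln in \<open>auto intro: has_field_derivative_Ln_off_cut\<close>)

lemma primitive_Ln_pos_cut_large_at_neg_real:
  assumes z: "z \<in> U \<inter> off_axes" and real: "Im (u z) = 0" "Re (u z) < 0"
  shows "W + \<bar>monodromy\<bar> < primitive Ln_pos_cut z"
proof -
  define r where "r = - Re (u z)"
  have u: "u z = - of_real r"
    using real by (simp add: r_def complex_eq_iff)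
  have r: "0 < r" "r < \<epsilon>"
    using real domain_bounds(6)[OF z] u by auto
  have "real k * (W + \<bar>monodromy\<bar>) < Re \<mu> * ln r - pi * Im \<mu> + 1 / r"
    using small_radius[OF r] by blast
  moreover have "real k * (real p * ln (cmod (fst z))) \<le> 0"
    using ln_norm_bounds(2)[OF domain_bounds(1-4)[OF z]] by (simp add: mult_nonneg_nonpos)
  ultimately show ?thesis
    unfolding primitive_Ln_pos_cut_neg_real[OF u r(1)] using k_pos by (simp add: field_simps)
qed

lemma F_eq_primitive_Ln_pos_cut:
  assumes "Re (u y) < 0" and large: "W + \<bar>monodromy\<bar> < primitive Ln_pos_cut y"
  shows "F y = primitive Ln_pos_cut y"
proof (cases "Im (u y) < 0")
  case True
  then have "primitive Ln y = primitive Ln_pos_cut y + monodromy"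
    by (simp add: primitive_Ln_pos_cut_lower)
  with large have "1 \<le> primitive Ln y / W"
    using W_pos abs_ge_minus_self[of monodromy] by (simp add: field_simps)
  with True show ?thesis
    by (simp add: F_def smooth_step_eq_1 primitive_Ln_pos_cut_lower)
next
  case False
  with assms(1) have "Im (u y) > 0 \<or> (Im (u y) = 0 \<and> Re (u y) < 0)"
    by linarith
  with False show ?thesis
    by (simp add: F_def primitive_Ln_pos_cut_upper)
qed

lemma regular_at_neg_real:
  assumes "z \<in> U \<inter> off_axes" and "Im (u z) = 0" "Re (u z) < 0"
  shows "regular_at z"
proof (rule regular_at_if_F_eq_primitive[where A="U \<inter> off_axes \<inter> {z. Re (u z) < 0}"
      and T="{W + \<bar>monodromy\<bar><..}"])
  show "open (U \<inter> off_axes \<inter> {z. Re (u z) < 0})"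
    by (intro open_Int open_domain open_Collect_less continuous_intros)
  show "primitive Ln_pos_cut z \<in> {W + \<bar>monodromy\<bar><..}"
    using primitive_Ln_pos_cut_large_at_neg_real[OF assms] by simp
qed (use assms F_eq_primitive_Ln_pos_cut in \<open>auto intro: has_field_derivative_Ln_pos_cut\<close>)

lemma regular_at_domain:
  assumes "z \<in> U \<inter> off_axes"
  shows "regular_at z"
proof -
  have "u z \<noteq> 0"
    using assms u_nonzero by blast
  then consider "Im (u z) > 0" | "Im (u z) < 0"
    | "Im (u z) = 0" "Re (u z) > 0" | "Im (u z) = 0" "Re (u z) < 0"
    by (metis complex_eq_iff linorder_neqE_linordered_idom zero_complex.sel)
  then show ?thesis
    by cases (use assms regular_at_upper regular_at_lower regular_at_pos_real
        regular_at_neg_real in blast)+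
qed

lemma smooth_on_F: "smooth_on (U \<inter> off_axes) F"
  using open_domain by (rule smooth_on_local)
    (use regular_at_domain in \<open>auto simp: regular_at_def\<close>)

lemma F_first_integral:
  assumes z: "z \<in> U \<inter> off_axes"
  shows "\<exists>F'. (F has_derivative F') (at z) \<and> (\<exists>v. F' v \<noteq> 0) \<and>
    (\<forall>v. re_tau p q k \<mu> z v = 0 \<longrightarrow> F' v = 0)"
proof -
  obtain \<kappa> where \<kappa>: "\<kappa> \<noteq> 0" "(F has_derivative (\<lambda>v. \<kappa> * re_tau p q k \<mu> z v)) (at z)"
    using regular_at_domain[OF z] unfolding regular_at_def by blast
  have "cmod \<mu> < 1 / cmod (u z)"
    using small_radius[OF domain_bounds(5,6)[OF z]] by blast
  then have "\<mu> + inverse (u z) \<noteq> 0"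
    by (metis add_eq_0_iff inverse_eq_divide norm_inverse norm_minus_cancel order_less_irrefl)
  then obtain v where "re_tau p q k \<mu> z v \<noteq> 0"
    using re_tau_nonzero z by blast
  with \<kappa> show ?thesis
    by (intro exI[of _ "\<lambda>v. \<kappa> * re_tau p q k \<mu> z v"] conjI exI[of _ v] allI impI) auto
qed

end

theorem proposition4p8:
  fixes p q k :: nat and \<mu> :: complex
  assumes "p > 0" and "q > 0" and "coprime p q" and "k \<ge> 1"
  shows "\<exists>(U :: (complex \<times> complex) set) (F :: complex \<times> complex \<Rightarrow> real).
           open U \<and> (0, 0) \<in> U \<and>
           smooth_on (U \<inter> off_axes) F \<and>
           (\<forall>z \<in> U \<inter> off_axes. \<exists>F'. (F has_derivative F') (at z) \<and>
               (\<exists>v. F' v \<noteq> 0) \<and>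
               (\<forall>v. re_tau p q k \<mu> z v = 0 \<longrightarrow> F' v = 0))"
proof -
  interpret resonant_form p q k \<mu>
    using assms by unfold_locales auto
  obtain M where M: "\<And>t. \<bar>deriv smooth_step t\<bar> \<le> M"
    using bounded_deriv_smooth_step by blast
  define W where "W = \<bar>monodromy\<bar> * M + 1"
  have W: "\<bar>monodromy * deriv smooth_step t\<bar> < W" for t
    using mult_left_mono[OF M[of t] abs_ge_zero[of monodromy]] by (simp add: W_def abs_mult)
  obtain \<epsilon> where "0 < \<epsilon>"
    and \<epsilon>: "\<forall>r. 0 < r \<and> r < \<epsilon> \<longrightarrow> (Re \<mu> - 1) * ln r - 1 / r < 0 \<and>
      real k * (W + \<bar>monodromy\<bar>) < Re \<mu> * ln r - pi * Im \<mu> + 1 / r \<and> cmod \<mu> < 1 / r"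
    using small_radius_exists by blast
  interpret resonant_form_gluing p q k \<mu> W \<epsilon>
    using W \<open>0 < \<epsilon>\<close> \<epsilon> by unfold_locales auto
  show ?thesis
    using open_U zero_in_U smooth_on_F F_first_integral by blast
qed

end
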